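(* Let $\mathcal{G}$ be an undirected connected weighted graph on $\{1,\dots,n\}$ with Laplacian $L$, let $A_i\in\mathbb{R}^{p\times d_i}$ for $i=1,\dots,n$ be such that $A=[A_1,\dots,A_n]$ has full row rank, and let $\mathbf{A}=\mathrm{diag}(A_1,\dots,A_n)$ and $\mathbf{L}=L\otimes I_p$. Then for every constant $c>0$, $\mathbf{A}\mathbf{A}^\top+c\mathbf{L}\succ0$.
   Context: The graph has symmetric adjacency matrix $[a_{ij}]$ with $a_{ij}\ge0$ ($a_{ij}>0$ iff $i$ and $j$ are neighbors), and Laplacian $L=\mathrm{diag}(\sum_j a_{ij})_i-[a_{ij}]$; connected means there is a path between any two vertices. $\mathbf{A}=\mathrm{diag}(A_1,\dots,A_n)$ is the block-diagonal matrix in $\mathbb{R}^{np\times\sum_i d_i}$. *)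

theory Defs
  imports "Jordan_Normal_Form.Matrix" "Jordan_Normal_Form.DL_Rank"
begin

text \<open>Vertices are 0..n-1 (the paper's 1..n). Weighted adjacency matrix W (n x n).\<close>

definition graph_laplacian :: "real mat \<Rightarrow> real mat" where
  "graph_laplacian W = mat (dim_row W) (dim_row W)
     (\<lambda>(i,j). (if i = j then (\<Sum>k<dim_row W. W $$ (i,k)) else 0) - W $$ (i,j))"

definition graph_connected :: "real mat \<Rightarrow> bool" where
  "graph_connected W \<longleftrightarrow>
     (\<forall>i<dim_row W. \<forall>j<dim_row W.
        (\<lambda>x y. x < dim_row W \<and> y < dim_row W \<and> W $$ (x,y) > 0)\<^sup>*\<^sup>* i j)"

definition kron :: "'a::times mat \<Rightarrow> 'a mat \<Rightarrow> 'a mat" where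
  "kron A B = mat (dim_row A * dim_row B) (dim_col A * dim_col B)
     (\<lambda>(i,j). A $$ (i div dim_row B, j div dim_col B) * B $$ (i mod dim_row B, j mod dim_col B))"

definition offs :: "(nat \<Rightarrow> nat) \<Rightarrow> nat \<Rightarrow> nat" where
  "offs d k = (\<Sum>i<k. d i)"

definition hcat_blocks :: "nat \<Rightarrow> nat \<Rightarrow> (nat \<Rightarrow> nat) \<Rightarrow> (nat \<Rightarrow> real mat) \<Rightarrow> real mat" where
  "hcat_blocks n p d Ab = mat p (offs d n)
     (\<lambda>(r,s). \<Sum>k<n. if offs d k \<le> s \<and> s < offs d (Suc k) then Ab k $$ (r, s - offs d k) else 0)"

definition blkdiag :: "nat \<Rightarrow> nat \<Rightarrow> (nat \<Rightarrow> nat) \<Rightarrow> (nat \<Rightarrow> real mat) \<Rightarrow> real mat" where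
  "blkdiag n p d Ab = mat (n * p) (offs d n)
     (\<lambda>(r,s). \<Sum>k<n. if r div p = k \<and> offs d k \<le> s \<and> s < offs d (Suc k)
                       then Ab k $$ (r mod p, s - offs d k) else 0)"

definition pos_def :: "real mat \<Rightarrow> bool" where
  "pos_def M \<longleftrightarrow> M \<in> carrier_mat (dim_row M) (dim_row M) \<and> transpose_mat M = M \<and>
     (\<forall>x \<in> carrier_vec (dim_row M). x \<noteq> 0\<^sub>v (dim_row M) \<longrightarrow> x \<bullet> (M *\<^sub>v x) > 0)"

end

theory Submission
  imports Defs
begin

text \<open>Write x in blocks x_1, ..., x_n of length p and let B = blkdiag(A_1, ..., A_n). The quadratic
  form of B B^T + c (L \<otimes> I_p) is |B^T x|^2 + (c/2) \<Sum>_{i,j} a_ij |x_i - x_j|^2, a sum of two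
  nonnegative terms. If it vanishes, the second term and connectivity force all blocks to equal one
  vector y, and then B^T x = 0 reads A_i^T y = 0 for every i, i.e. A^T y = 0; since A has full row
  rank, y = 0 and hence x = 0.\<close>

lemma sum_lessThan_mult:
  fixes n p :: nat
  shows "(\<Sum>r<n * p. f r) = (\<Sum>i<n. \<Sum>a<p. f (i * p + a))"
  unfolding sum.nat_group[of _ p n, symmetric]
  by (simp add: sum.atLeastLessThan_shift_0 atLeast0LessThan comp_def)

lemma mult_add_less_mult:
  fixes i n a p :: nat
  assumes "i < n" "a < p"
  shows "i * p + a < n * p"
proof -
  have "i * p + a < Suc i * p"
    using assms(2) by simp
  also have "\<dots> \<le> n * p"
    using assms(1) by (intro mult_le_mono1) simp
  finally show ?thesis .
qed

lemma scalar_prod_mult_mat_vec_sum: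
  fixes M :: "'a :: comm_semiring_0 mat"
  assumes "M \<in> carrier_mat n n" "x \<in> carrier_vec n"
  shows "x \<bullet> (M *\<^sub>v x) = (\<Sum>r<n. \<Sum>s<n. x $ r * M $$ (r, s) * x $ s)"
  using assms
  by (auto simp: scalar_prod_def sum_distrib_left atLeast0LessThan mult.assoc intro!: sum.cong)

lemma scalar_prod_self_nonneg: "(v :: real vec) \<bullet> v \<ge> 0"
  using conjugate_square_ge_0_vec[of v] by (simp add: scalar_prod_def)

lemma scalar_prod_self_eq_0_iff: "(v :: real vec) \<in> carrier_vec n \<Longrightarrow> v \<bullet> v = 0 \<longleftrightarrow> v = 0\<^sub>v n"
  using conjugate_square_eq_0_vec[of v n] by (simp add: scalar_prod_def)

lemma blockwise_zero_vec:
  assumes x: "x \<in> carrier_vec (n * p)" and blocks: "\<forall>i<n. \<forall>a<p. x $ (i * p + a) = 0"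
  shows "x = 0\<^sub>v (n * p)"
proof (rule eq_vecI)
  fix r assume "r < dim_vec (0\<^sub>v (n * p))"
  then have r: "r < n * p"
    by simp
  then have "p > 0"
    by (cases p) auto
  then have "r div p < n" "r mod p < p"
    using r by (simp_all add: less_mult_imp_div_less mult.commute)
  then show "x $ r = 0\<^sub>v (n * p) $ r"
    using blocks r by (metis div_mult_mod_eq index_zero_vec(1))
qed (use x in simp)

lemma symmetric_index:
  assumes "W \<in> carrier_mat n n" "transpose_mat W = W" "i < n" "j < n"
  shows "W $$ (i, j) = W $$ (j, i)"
  using assms by (metis carrier_matD index_transpose_mat(1))

lemma transpose_smult_mat: "transpose_mat (c \<cdot>\<^sub>m A) = c \<cdot>\<^sub>m transpose_mat A"
  by (rule eq_matI) auto

lemma smult_mat_mult_vec: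
  fixes A :: "'a :: comm_semiring_0 mat"
  assumes "A \<in> carrier_mat nr nc" "v \<in> carrier_vec nc"
  shows "(c \<cdot>\<^sub>m A) *\<^sub>v v = c \<cdot>\<^sub>v (A *\<^sub>v v)"
  using assms by (intro eq_vecI) (auto simp: scalar_prod_def sum_distrib_left mult.assoc)

lemma quadratic_form_gram_plus_smult:
  fixes B K :: "'a :: comm_semiring_0 mat"
  assumes B: "B \<in> carrier_mat N D" and K: "K \<in> carrier_mat N N" and x: "x \<in> carrier_vec N"
  shows "x \<bullet> ((B * transpose_mat B + c \<cdot>\<^sub>m K) *\<^sub>v x)
       = (transpose_mat B *\<^sub>v x) \<bullet> (transpose_mat B *\<^sub>v x) + c * (x \<bullet> (K *\<^sub>v x))"
proof -
  have Bt_x: "transpose_mat B *\<^sub>v x \<in> carrier_vec D"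
    using B x by simp
  have "x \<bullet> ((B * transpose_mat B) *\<^sub>v x) = x \<bullet> (B *\<^sub>v (transpose_mat B *\<^sub>v x))"
    using B x by simp
  also have "\<dots> = (transpose_mat B *\<^sub>v x) \<bullet> (transpose_mat B *\<^sub>v x)"
    using transpose_vec_mult_scalar[OF B Bt_x x] by simp
  finally show ?thesis
    using B K x
    by (simp add: add_mult_distrib_mat_vec[of _ N N] scalar_prod_add_distrib[of _ N] smult_mat_mult_vec)
qed

lemma pos_def_gram_plus_smult:
  fixes B K :: "real mat"
  assumes B: "B \<in> carrier_mat N D" and K: "K \<in> carrier_mat N N" and K_sym: "transpose_mat K = K"
    and K_nonneg: "\<forall>x \<in> carrier_vec N. x \<bullet> (K *\<^sub>v x) \<ge> 0"
    and common_kernel: "\<forall>x \<in> carrier_vec N.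
          transpose_mat B *\<^sub>v x = 0\<^sub>v D \<longrightarrow> x \<bullet> (K *\<^sub>v x) = 0 \<longrightarrow> x = 0\<^sub>v N"
    and c_pos: "c > 0"
  shows "pos_def (B * transpose_mat B + c \<cdot>\<^sub>m K)"
proof -
  have "transpose_mat (B * transpose_mat B) = B * transpose_mat B"
    using B by (simp add: transpose_mult[of B N D "transpose_mat B"])
  then have sym: "transpose_mat (B * transpose_mat B + c \<cdot>\<^sub>m K) = B * transpose_mat B + c \<cdot>\<^sub>m K"
    using B K K_sym by (simp add: transpose_add[of _ N N] transpose_smult_mat)
  have "x \<bullet> ((B * transpose_mat B + c \<cdot>\<^sub>m K) *\<^sub>v x) > 0"
    if x: "x \<in> carrier_vec N" and x_nz: "x \<noteq> 0\<^sub>v N" for x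
  proof (rule ccontr)
    let ?u = "transpose_mat B *\<^sub>v x"
    assume "\<not> x \<bullet> ((B * transpose_mat B + c \<cdot>\<^sub>m K) *\<^sub>v x) > 0"
    then have "?u \<bullet> ?u + c * (x \<bullet> (K *\<^sub>v x)) \<le> 0"
      by (simp add: quadratic_form_gram_plus_smult[OF B K x])
    moreover have "c * (x \<bullet> (K *\<^sub>v x)) \<ge> 0"
      using c_pos K_nonneg x by simp
    ultimately have "?u \<bullet> ?u = 0" and "c * (x \<bullet> (K *\<^sub>v x)) = 0"
      using scalar_prod_self_nonneg[of ?u] by linarith+
    moreover have "?u \<in> carrier_vec D"
      using B x by (intro mult_mat_vec_carrier) simp_all
    ultimately have "?u = 0\<^sub>v D" and "x \<bullet> (K *\<^sub>v x) = 0"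
      using scalar_prod_self_eq_0_iff c_pos by auto
    with common_kernel x x_nz show False
      by blast
  qed
  with B K sym show ?thesis
    unfolding pos_def_def by simp
qed

lemma (in vec_space) full_rank_span_cols:
  assumes A: "A \<in> carrier_mat n nc" and r: "rank A = n"
  shows "span (set (cols A)) = carrier_vec n"
proof -
  let ?S = "set (cols A)"
  have S: "?S \<subseteq> carrier_vec n"
    using cols_dim A by (metis carrier_matD(1))
  have vs: "vectorspace class_ring (span_vs ?S)"
    using field.field_axioms vectorspace_def submodule_is_module[OF span_is_submodule[OF S]] by metis
  obtain b where fb: "finite b" and bb: "vectorspace.basis class_ring (span_vs ?S) b"
    using vectorspace.finite_basis_exists[OF vs fin_dim_span_cols[OF A]] by blast
  have "card b = n"
    using vectorspace.dim_basis[OF vs fb bb] r unfolding rank_def by simp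
  have bS: "b \<subseteq> span ?S"
    using bb vectorspace.basis_def[OF vs] by auto
  have "lin_indpt b"
    using bb vectorspace.basis_def[OF vs] span_li_not_depend(2)[OF bS span_is_submodule[OF S]] by simp
  moreover have "b \<subseteq> carrier_vec n"
    using bS span_closed[OF S] by auto
  ultimately have "basis b"
    using dim_li_is_basis[OF fin_dim fb] \<open>card b = n\<close> by (simp add: dim_is_n)
  then have "carrier_vec n \<subseteq> span ?S"
    using span_is_subset[OF bS span_is_submodule[OF S]] unfolding basis_def by auto
  then show ?thesis
    using span_closed[OF S] by auto
qed

lemma full_row_rank_orthogonal_cols_eq_0:
  fixes H :: "real mat"
  assumes H: "H \<in> carrier_mat p D" and rank: "vec_space.rank p H = p"
    and y: "y \<in> carrier_vec p" and orth: "\<forall>s<D. y \<bullet> col H s = 0"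
  shows "y = 0\<^sub>v p"
proof -
  interpret vec_space "TYPE(real)" p .
  have S: "set (cols H) \<subseteq> carrier_vec p"
    using H by (auto simp: cols_def)
  have "y \<in> orthogonal_complement (set (cols H))"
    using y orth H unfolding orthogonal_complement_def by (auto simp: cols_def)
  then have "y \<in> orthogonal_complement (carrier_vec p)"
    using in_orthogonal_complement_span[OF S] full_rank_span_cols[OF H rank] by simp
  then have "y \<bullet> y = 0"
    using y unfolding orthogonal_complement_def by auto
  then show ?thesis
    using scalar_prod_self_eq_0_iff[OF y] by simp
qed

lemma transpose_kron: "transpose_mat (kron A B) = kron (transpose_mat A) (transpose_mat B)"
proof (rule eq_matI)
  fix i j assume "i < dim_row (kron (transpose_mat A) (transpose_mat B))"
    "j < dim_col (kron (transpose_mat A) (transpose_mat B))"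
  then have ij: "i < dim_col A * dim_col B" "j < dim_row A * dim_row B"
    by (simp_all add: kron_def)
  then have "dim_col B > 0" "dim_row B > 0"
    by (auto intro: gr0I)
  with ij have "i div dim_col B < dim_col A" "i mod dim_col B < dim_col B"
    "j div dim_row B < dim_row A" "j mod dim_row B < dim_row B"
    by (auto simp: less_mult_imp_div_less mult.commute)
  then show "transpose_mat (kron A B) $$ (i, j) = kron (transpose_mat A) (transpose_mat B) $$ (i, j)"
    using ij by (simp add: kron_def)
qed (simp_all add: kron_def)

lemma kron_one_quadratic_form:
  fixes L :: "'a :: comm_semiring_1 mat"
  assumes L: "L \<in> carrier_mat n n" and x: "x \<in> carrier_vec (n * p)"
  shows "x \<bullet> (kron L (1\<^sub>m p) *\<^sub>v x)
       = (\<Sum>a<p. \<Sum>i<n. \<Sum>j<n. x $ (i * p + a) * L $$ (i, j) * x $ (j * p + a))"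
proof -
  have K: "kron L (1\<^sub>m p) \<in> carrier_mat (n * p) (n * p)"
    using L by (simp add: kron_def)
  have K_index: "kron L (1\<^sub>m p) $$ (i * p + a, j * p + b) = L $$ (i, j) * (if a = b then 1 else 0)"
    if "i < n" "j < n" "a < p" "b < p" for i j a b
    using that L mult_add_less_mult[OF that(1,3)] mult_add_less_mult[OF that(2,4)]
    by (simp add: kron_def)
  have "x \<bullet> (kron L (1\<^sub>m p) *\<^sub>v x)
      = (\<Sum>i<n. \<Sum>a<p. \<Sum>j<n. \<Sum>b<p. x $ (i * p + a) * kron L (1\<^sub>m p) $$ (i * p + a, j * p + b) * x $ (j * p + b))"
    by (simp add: scalar_prod_mult_mat_vec_sum[OF K x] sum_lessThan_mult)
  also have "\<dots> = (\<Sum>i<n. \<Sum>a<p. \<Sum>j<n. x $ (i * p + a) * L $$ (i, j) * x $ (j * p + a))"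
  proof (intro sum.cong refl)
    fix i a j assume "i \<in> {..<n}" "a \<in> {..<p}" "j \<in> {..<n}"
    then have "(\<Sum>b<p. x $ (i * p + a) * kron L (1\<^sub>m p) $$ (i * p + a, j * p + b) * x $ (j * p + b))
        = (\<Sum>b<p. if b = a then x $ (i * p + a) * L $$ (i, j) * x $ (j * p + a) else 0)"
      by (intro sum.cong refl) (auto simp: K_index)
    then show "(\<Sum>b<p. x $ (i * p + a) * kron L (1\<^sub>m p) $$ (i * p + a, j * p + b) * x $ (j * p + b))
        = x $ (i * p + a) * L $$ (i, j) * x $ (j * p + a)"
      using \<open>a \<in> {..<p}\<close> by simp
  qed
  also have "\<dots> = (\<Sum>a<p. \<Sum>i<n. \<Sum>j<n. x $ (i * p + a) * L $$ (i, j) * x $ (j * p + a))"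
    by (rule sum.swap)
  finally show ?thesis .
qed

lemma graph_laplacian_carrier: "W \<in> carrier_mat n n \<Longrightarrow> graph_laplacian W \<in> carrier_mat n n"
  unfolding graph_laplacian_def by auto

lemma graph_laplacian_index:
  assumes "W \<in> carrier_mat n n" "i < n" "j < n"
  shows "graph_laplacian W $$ (i, j) = (if i = j then (\<Sum>k<n. W $$ (i, k)) else 0) - W $$ (i, j)"
  using assms unfolding graph_laplacian_def by auto

lemma transpose_graph_laplacian:
  assumes "W \<in> carrier_mat n n" "transpose_mat W = W"
  shows "transpose_mat (graph_laplacian W) = graph_laplacian W"
  using graph_laplacian_carrier[OF assms(1)]
  by (intro eq_matI) (auto simp: graph_laplacian_index[OF assms(1)] symmetric_index[OF assms])

lemma graph_laplacian_quadratic_form: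
  assumes W: "W \<in> carrier_mat n n" "transpose_mat W = W"
  shows "(\<Sum>i<n. \<Sum>j<n. z i * graph_laplacian W $$ (i, j) * z j)
       = (\<Sum>i<n. \<Sum>j<n. W $$ (i, j) * (z i - z j)\<^sup>2) / 2"
proof -
  have swap: "(\<Sum>i<n. \<Sum>j<n. W $$ (i, j) * (z j)\<^sup>2) = (\<Sum>i<n. \<Sum>j<n. W $$ (i, j) * (z i)\<^sup>2)"
    by (subst sum.swap) (auto simp: symmetric_index[OF W] intro!: sum.cong)
  have "(\<Sum>i<n. \<Sum>j<n. z i * graph_laplacian W $$ (i, j) * z j)
      = (\<Sum>i<n. \<Sum>j<n. (if i = j then z i * (\<Sum>k<n. W $$ (i, k)) * z j else 0) - W $$ (i, j) * z i * z j)"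
    by (intro sum.cong refl) (simp add: graph_laplacian_index[OF W(1)] algebra_simps)
  also have "\<dots> = (\<Sum>i<n. \<Sum>j<n. W $$ (i, j) * (z i)\<^sup>2) - (\<Sum>i<n. \<Sum>j<n. W $$ (i, j) * z i * z j)"
    by (simp add: sum_subtractf sum_distrib_left sum_distrib_right power2_eq_square algebra_simps)
  also have "\<dots> = (\<Sum>i<n. \<Sum>j<n. W $$ (i, j) * (z i - z j)\<^sup>2) / 2"
    using swap by (simp add: power2_diff sum_subtractf sum.distrib sum_distrib_left algebra_simps)
  finally show ?thesis .
qed

lemma graph_laplacian_quadratic_form_nonneg:
  assumes "W \<in> carrier_mat n n" "transpose_mat W = W" "\<forall>i<n. \<forall>j<n. W $$ (i, j) \<ge> 0"
  shows "(\<Sum>i<n. \<Sum>j<n. z i * graph_laplacian W $$ (i, j) * z j) \<ge> 0"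
  using assms by (auto simp: graph_laplacian_quadratic_form intro!: sum_nonneg)

lemma graph_connected_constant:
  assumes W: "W \<in> carrier_mat n n" and conn: "graph_connected W"
    and edge: "\<forall>i<n. \<forall>j<n. W $$ (i, j) > 0 \<longrightarrow> f i = f j"
    and "i < n" "j < n"
  shows "f i = f j"
proof -
  have "(\<lambda>x y. x < dim_row W \<and> y < dim_row W \<and> W $$ (x, y) > 0)\<^sup>*\<^sup>* i j"
    using conn assms(4,5) W unfolding graph_connected_def by auto
  then show ?thesis
    by (induction rule: rtranclp_induct) (use edge W in auto)
qed

lemma graph_laplacian_quadratic_form_eq_0_imp_constant:
  assumes W: "W \<in> carrier_mat n n" "transpose_mat W = W"
    and W_nonneg: "\<forall>i<n. \<forall>j<n. W $$ (i, j) \<ge> 0" and conn: "graph_connected W"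
    and form: "(\<Sum>i<n. \<Sum>j<n. z i * graph_laplacian W $$ (i, j) * z j) = 0"
    and "i < n" "j < n"
  shows "z i = z j"
proof (rule graph_connected_constant[OF W(1) conn _ assms(6,7)], intro allI impI)
  fix k l assume kl: "k < n" "l < n" "W $$ (k, l) > 0"
  let ?t = "\<lambda>i j. W $$ (i, j) * (z i - z j)\<^sup>2"
  have terms_nonneg: "?t i j \<ge> 0" if "i < n" "j < n" for i j
    using W_nonneg that by simp
  have "(\<Sum>i<n. \<Sum>j<n. ?t i j) = 0"
    using form by (simp add: graph_laplacian_quadratic_form[OF W])
  then have "(\<Sum>j<n. ?t k j) = 0"
    by (rule sum_nonneg_0[rotated 2]) (use kl terms_nonneg in \<open>auto intro: sum_nonneg\<close>)
  then have "?t k l = 0"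
    by (rule sum_nonneg_0[rotated 2]) (use kl terms_nonneg in auto)
  then show "z k = z l"
    using kl by simp
qed

lemma kron_graph_laplacian_quadratic_form_nonneg:
  assumes "W \<in> carrier_mat n n" "transpose_mat W = W" "\<forall>i<n. \<forall>j<n. W $$ (i, j) \<ge> 0"
    and "x \<in> carrier_vec (n * p)"
  shows "x \<bullet> (kron (graph_laplacian W) (1\<^sub>m p) *\<^sub>v x) \<ge> 0"
  unfolding kron_one_quadratic_form[OF graph_laplacian_carrier[OF assms(1)] assms(4)]
  by (intro sum_nonneg graph_laplacian_quadratic_form_nonneg[OF assms(1-3)])

lemma kron_graph_laplacian_quadratic_form_eq_0_imp_stacked:
  assumes W: "W \<in> carrier_mat n n" "transpose_mat W = W" "\<forall>i<n. \<forall>j<n. W $$ (i, j) \<ge> 0"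
    and conn: "graph_connected W" and x: "x \<in> carrier_vec (n * p)"
    and form: "x \<bullet> (kron (graph_laplacian W) (1\<^sub>m p) *\<^sub>v x) = 0"
    and "i < n" "a < p"
  shows "x $ (i * p + a) = x $ a"
proof -
  let ?q = "\<lambda>a. \<Sum>i<n. \<Sum>j<n. x $ (i * p + a) * graph_laplacian W $$ (i, j) * x $ (j * p + a)"
  have "(\<Sum>a<p. ?q a) = 0"
    using form by (simp add: kron_one_quadratic_form[OF graph_laplacian_carrier[OF W(1)] x])
  then have "?q a = 0"
    using \<open>a < p\<close> graph_laplacian_quadratic_form_nonneg[OF W] by (simp add: sum_nonneg_eq_0_iff)
  from graph_laplacian_quadratic_form_eq_0_imp_constant[OF W conn this \<open>i < n\<close>, of 0]
  show ?thesis
    using \<open>i < n\<close> by simp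
qed

lemma offs_mono: "i \<le> j \<Longrightarrow> offs d i \<le> offs d j"
  unfolding offs_def by (rule sum_mono2) auto

lemma offs_block_exists: "s < offs d n \<Longrightarrow> \<exists>k<n. offs d k \<le> s \<and> s < offs d (Suc k)"
proof (induction n)
  case 0
  then show ?case by (simp add: offs_def)
next
  case (Suc n)
  show ?case
  proof (cases "s < offs d n")
    case True
    then show ?thesis using Suc.IH by (meson less_SucI)
  next
    case False
    then show ?thesis using Suc.prems by (intro exI[of _ n]) auto
  qed
qed

lemma offs_block_unique:
  assumes "offs d k \<le> s" "s < offs d (Suc k)" "offs d k' \<le> s" "s < offs d (Suc k')"
  shows "k' = k"
proof (rule ccontr)
  assume "k' \<noteq> k"
  then consider "Suc k' \<le> k" | "Suc k \<le> k'"
    by linarith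
  then show False
  proof cases
    case 1
    then show False using offs_mono[OF 1, of d] assms by linarith
  next
    case 2
    then show False using offs_mono[OF 2, of d] assms by linarith
  qed
qed

lemma sum_offs_block:
  assumes "k < n" "offs d k \<le> s" "s < offs d (Suc k)"
  shows "(\<Sum>k'<n. if P k' \<and> offs d k' \<le> s \<and> s < offs d (Suc k') then f k' else 0)
       = (if P k then f k else (0 :: 'a :: comm_monoid_add))"
proof -
  have "(\<Sum>k'<n. if P k' \<and> offs d k' \<le> s \<and> s < offs d (Suc k') then f k' else 0)
      = (\<Sum>k'<n. if k' = k then (if P k then f k else 0) else 0)"
    using assms(2,3) by (intro sum.cong refl) (auto dest: offs_block_unique[OF assms(2,3)])
  then show ?thesis
    using assms(1) by simp
qed

lemma hcat_blocks_carrier: "hcat_blocks n p d Ab \<in> carrier_mat p (offs d n)"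
  by (simp add: hcat_blocks_def)

lemma blkdiag_carrier: "blkdiag n p d Ab \<in> carrier_mat (n * p) (offs d n)"
  by (simp add: blkdiag_def)

lemma hcat_blocks_index:
  assumes k: "k < n" "offs d k \<le> s" "s < offs d (Suc k)" and "a < p"
  shows "hcat_blocks n p d Ab $$ (a, s) = Ab k $$ (a, s - offs d k)"
proof -
  have "s < offs d n"
    using k offs_mono[of "Suc k" n d] by simp
  then show ?thesis
    using sum_offs_block[OF k, of "\<lambda>_. True"] \<open>a < p\<close> by (simp add: hcat_blocks_def)
qed

lemma blkdiag_index:
  assumes k: "k < n" "offs d k \<le> s" "s < offs d (Suc k)" and "i < n" "a < p"
  shows "blkdiag n p d Ab $$ (i * p + a, s) = (if i = k then Ab k $$ (a, s - offs d k) else 0)"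
proof -
  have "s < offs d n"
    using k offs_mono[of "Suc k" n d] by simp
  then have "blkdiag n p d Ab $$ (i * p + a, s)
      = (\<Sum>k'<n. if i = k' \<and> offs d k' \<le> s \<and> s < offs d (Suc k') then Ab k' $$ (a, s - offs d k') else 0)"
    using assms(4,5) mult_add_less_mult[OF assms(4,5)] by (simp add: blkdiag_def cong: if_cong)
  then show ?thesis
    by (simp only: sum_offs_block[OF k])
qed

lemma transpose_blkdiag_mult_stacked_vec:
  assumes x: "x \<in> carrier_vec (n * p)"
    and stacked: "\<forall>i<n. \<forall>a<p. x $ (i * p + a) = y $ a" and s: "s < offs d n"
  shows "(transpose_mat (blkdiag n p d Ab) *\<^sub>v x) $ s = y \<bullet> col (hcat_blocks n p d Ab) s"
proof -
  obtain k where k: "k < n" "offs d k \<le> s" "s < offs d (Suc k)"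
    using offs_block_exists[OF s] by blast
  have "(transpose_mat (blkdiag n p d Ab) *\<^sub>v x) $ s = (\<Sum>r<n * p. blkdiag n p d Ab $$ (r, s) * x $ r)"
    using x s by (auto simp: blkdiag_def scalar_prod_def atLeast0LessThan intro!: sum.cong)
  also have "\<dots> = (\<Sum>i<n. \<Sum>a<p. blkdiag n p d Ab $$ (i * p + a, s) * x $ (i * p + a))"
    by (rule sum_lessThan_mult)
  also have "\<dots> = (\<Sum>i<n. if i = k then (\<Sum>a<p. Ab k $$ (a, s - offs d k) * y $ a) else 0)"
    using stacked by (intro sum.cong refl) (auto simp: blkdiag_index[OF k])
  also have "\<dots> = (\<Sum>a<p. y $ a * hcat_blocks n p d Ab $$ (a, s))"
    using k by (auto simp: hcat_blocks_index[OF k] mult.commute intro: sum.cong)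
  also have "\<dots> = y \<bullet> col (hcat_blocks n p d Ab) s"
    using hcat_blocks_carrier[of n p d Ab] s by (auto simp: scalar_prod_def atLeast0LessThan intro: sum.cong)
  finally show ?thesis .
qed

lemma blkdiag_kron_graph_laplacian_common_kernel:
  assumes W: "W \<in> carrier_mat n n" "transpose_mat W = W" "\<forall>i<n. \<forall>j<n. W $$ (i, j) \<ge> 0"
    and conn: "graph_connected W"
    and full_row_rank: "vec_space.rank p (hcat_blocks n p d Ab) = p"
    and x: "x \<in> carrier_vec (n * p)"
    and kernel_blkdiag: "transpose_mat (blkdiag n p d Ab) *\<^sub>v x = 0\<^sub>v (offs d n)"
    and kernel_laplacian: "x \<bullet> (kron (graph_laplacian W) (1\<^sub>m p) *\<^sub>v x) = 0"
  shows "x = 0\<^sub>v (n * p)"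
proof -
  define y where "y = vec p (\<lambda>a. x $ a)"
  have stacked: "\<forall>i<n. \<forall>a<p. x $ (i * p + a) = y $ a"
    using kron_graph_laplacian_quadratic_form_eq_0_imp_stacked[OF W conn x kernel_laplacian]
    by (simp add: y_def)
  have "\<forall>s<offs d n. y \<bullet> col (hcat_blocks n p d Ab) s = 0"
    using transpose_blkdiag_mult_stacked_vec[OF x stacked, where d = d and Ab = Ab] kernel_blkdiag
    by simp
  then have "y = 0\<^sub>v p"
    using full_row_rank_orthogonal_cols_eq_0[OF hcat_blocks_carrier full_row_rank] by (simp add: y_def)
  with stacked show ?thesis
    by (intro blockwise_zero_vec[OF x]) simp
qed

theorem lemma6:
  fixes n p :: nat and d :: "nat \<Rightarrow> nat" and W :: "real mat"
    and Ab :: "nat \<Rightarrow> real mat" and c :: real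
  assumes W_carrier: "W \<in> carrier_mat n n"
    and W_sym: "transpose_mat W = W"
    and W_nonneg: "\<forall>i<n. \<forall>j<n. W $$ (i,j) \<ge> 0"
    and conn: "graph_connected W"
    and A_carrier: "\<forall>i<n. Ab i \<in> carrier_mat p (d i)"
    and full_row_rank: "vec_space.rank p (hcat_blocks n p d Ab) = p"
    and c_pos: "c > 0"
  shows "pos_def (blkdiag n p d Ab * transpose_mat (blkdiag n p d Ab)
                  + c \<cdot>\<^sub>m kron (graph_laplacian W) (1\<^sub>m p))"
proof (rule pos_def_gram_plus_smult[OF blkdiag_carrier _ _ _ _ c_pos])
  show "kron (graph_laplacian W) (1\<^sub>m p) \<in> carrier_mat (n * p) (n * p)"
    using graph_laplacian_carrier[OF W_carrier] by (simp add: kron_def)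
  show "transpose_mat (kron (graph_laplacian W) (1\<^sub>m p)) = kron (graph_laplacian W) (1\<^sub>m p)"
    by (simp add: transpose_kron transpose_graph_laplacian[OF W_carrier W_sym])
  show "\<forall>x \<in> carrier_vec (n * p). x \<bullet> (kron (graph_laplacian W) (1\<^sub>m p) *\<^sub>v x) \<ge> 0"
    using kron_graph_laplacian_quadratic_form_nonneg[OF W_carrier W_sym W_nonneg] by blast
  show "\<forall>x \<in> carrier_vec (n * p). transpose_mat (blkdiag n p d Ab) *\<^sub>v x = 0\<^sub>v (offs d n) \<longrightarrow>
      x \<bullet> (kron (graph_laplacian W) (1\<^sub>m p) *\<^sub>v x) = 0 \<longrightarrow> x = 0\<^sub>v (n * p)"
    using blkdiag_kron_graph_laplacian_common_kernel[OF W_carrier W_sym W_nonneg conn full_row_rank]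
    by blast
qed

end
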